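(* Let $H,K$ be $d\times d$ Hermitian matrices with $HK\ne KH$, and define the $2d\times2d$ Hermitian matrices $H_1:=H\oplus H$, $H_2:=(-H)\oplus(-K)$, $H_3:=K\oplus K$. Then: any two of $H_1,H_2,H_3$ do not commute; each $H_j$ does not commute with $H_k+H_l$ for any $k\ne l$; each $H_j$ does not commute with $H_1+H_2+H_3$. Nevertheless $\mathrm{Tr}\,e^{H_1+H_2+H_3}=\mathrm{Tr}\,e^{H_1}e^{H_2}e^{H_3}$, and for every $r>0$, \[ \mathrm{Tr}\,\exp\bigl(r(H_1+H_2+H_3)\bigr)=\int_{-\infty}^\infty\mathrm{Tr}\,\big|e^{(1+it)H_1}e^{(1+it)H_2}e^{(1+it)H_3}\big|^r\,d\beta_0(t). \]
   Context: $|X|:=(X^*X)^{1/2}$. $\beta_0$ is the probability measure on $\mathbb{R}$ with density $\frac{\pi}{2(\cosh(\pi t)+1)}$, the $\theta\searrow0$ limit of $d\beta_\theta(t)=\frac{\sin(\pi\theta)}{2\theta(\cosh(\pi t)+\cos(\pi\theta))}dt$. For general Hermitian $H_1,\dots,H_n$ one has the multivariate Golden--Thompson inequality $\mathrm{Tr}\exp(r\sum_j H_j)\le\int\mathrm{Tr}|\prod_j e^{(1+it)H_j}|^r d\beta_0(t)$; the claim is that equality holds here. *)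

theory Defs
  imports "HOL-Analysis.Analysis" "Jordan_Normal_Form.Schur_Decomposition"
begin

definition hermitian_mat :: "nat \<Rightarrow> complex mat \<Rightarrow> bool" where
  "hermitian_mat n A \<longleftrightarrow> A \<in> carrier_mat n n \<and> mat_adjoint A = A"

definition unitary_mat :: "nat \<Rightarrow> complex mat \<Rightarrow> bool" where
  "unitary_mat n U \<longleftrightarrow> U \<in> carrier_mat n n \<and> U * mat_adjoint U = 1\<^sub>m n
     \<and> mat_adjoint U * U = 1\<^sub>m n"

definition mat_exp :: "complex mat \<Rightarrow> complex mat" where
  "mat_exp A = mat (dim_row A) (dim_col A)
     (\<lambda>(i,j). \<Sum>k. (A ^\<^sub>m k) $$ (i,j) / of_nat (fact k))"

text \<open>Functional calculus for Hermitian matrices: if A = U D U^* with U unitary and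
  D real diagonal, then f(A) = U f(D) U^*.\<close>
definition herm_fun :: "(real \<Rightarrow> real) \<Rightarrow> complex mat \<Rightarrow> complex mat" where
  "herm_fun f A = (SOME B. \<exists>U D. unitary_mat (dim_row A) U \<and> D \<in> carrier_mat (dim_row A) (dim_row A)
      \<and> diagonal_mat D \<and> (\<forall>i < dim_row A. D $$ (i,i) \<in> \<real>)
      \<and> A = U * D * mat_adjoint U
      \<and> B = U * mat (dim_row A) (dim_row A)
              (\<lambda>(i,j). if i = j then complex_of_real (f (Re (D $$ (i,i)))) else 0)
            * mat_adjoint U)"

definition mat_abs :: "complex mat \<Rightarrow> complex mat" where
  "mat_abs X = herm_fun sqrt (mat_adjoint X * X)"

definition mat_abs_pow :: "complex mat \<Rightarrow> real \<Rightarrow> complex mat" where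
  "mat_abs_pow X r = herm_fun (\<lambda>x. x powr r) (mat_abs X)"

definition mtrace :: "complex mat \<Rightarrow> complex" where
  "mtrace A = (\<Sum>i<dim_row A. A $$ (i,i))"

definition dsum_mat :: "complex mat \<Rightarrow> complex mat \<Rightarrow> complex mat" where
  "dsum_mat A B = four_block_mat A (0\<^sub>m (dim_row A) (dim_col B)) (0\<^sub>m (dim_row B) (dim_col A)) B"

definition beta0 :: "real measure" where
  "beta0 = density lborel (\<lambda>t. ennreal (pi / (2 * (cosh (pi * t) + 1))))"

end

theory Submission
  imports Defs "HOL-Real_Asymp.Real_Asymp"
begin

text \<open>The blocks of \<open>H\<^sub>1, H\<^sub>2, H\<^sub>3\<close> are \<open>H, -H, K\<close> and \<open>H, -K, K\<close>, so
  \<open>H\<^sub>1 + H\<^sub>2 + H\<^sub>3 = K \<oplus> H\<close> and, for every scalar \<open>c\<close>, the product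
  \<open>exp (c H\<^sub>1) exp (c H\<^sub>2) exp (c H\<^sub>3)\<close> telescopes blockwise to
  \<open>exp (c K) \<oplus> exp (c H) = exp (c (H\<^sub>1 + H\<^sub>2 + H\<^sub>3))\<close>.
  For Hermitian \<open>G\<close> one has \<open>|exp ((1 + it) G)|\<^sup>r = exp (r G)\<close>, so the integrand does not
  depend on \<open>t\<close> and integrating against the probability measure \<open>\<beta>\<^sub>0\<close> returns it.
  Evaluating \<open>|X|\<close> and its powers needs the spectral theorem for Hermitian matrices.
  Non-commutativity reduces to \<open>[aH + bK, cH + eK] = (ae - bc) [H, K]\<close>.\<close>

lemma smult_one_mat [simp]: "(1 :: 'a :: semiring_1) \<cdot>\<^sub>m A = A"
  by (rule eq_matI) auto

lemma mat_adjoint_dims [simp]: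
  "dim_row (mat_adjoint A) = dim_col A" "dim_col (mat_adjoint A) = dim_row A"
  by (auto simp: mat_adjoint_def)

lemma mat_adjoint_index [simp]:
  "i < dim_col A \<Longrightarrow> j < dim_row A \<Longrightarrow> mat_adjoint A $$ (i,j) = cnj (A $$ (j,i))"
  by (auto simp: mat_adjoint_def mat_of_rows_def)

lemma mat_adjoint_carrier [simp]: "A \<in> carrier_mat n m \<Longrightarrow> mat_adjoint A \<in> carrier_mat m n"
  unfolding carrier_mat_def by simp

lemma index_mult_mat_sum:
  "i < dim_row A \<Longrightarrow> j < dim_col B \<Longrightarrow> dim_col A = dim_row B \<Longrightarrow>
   (A * B) $$ (i,j) = (\<Sum>k<dim_row B. A $$ (i,k) * B $$ (k,j))"
  by (simp add: index_mult_mat scalar_prod_def atLeast0LessThan)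

lemma mat_adjoint_mult:
  fixes A B :: "complex mat"
  assumes "A \<in> carrier_mat n k" "B \<in> carrier_mat k m"
  shows "mat_adjoint (A * B) = mat_adjoint B * mat_adjoint A"
  by (rule eq_matI)
    (use assms in \<open>auto simp: index_mult_mat_sum intro!: sum.cong simp del: index_mult_mat(1)\<close>)

lemma mat_adjoint_adjoint [simp]: "mat_adjoint (mat_adjoint A) = (A :: complex mat)"
  by (rule eq_matI) auto

lemma mat_adjoint_one [simp]: "mat_adjoint (1\<^sub>m n) = (1\<^sub>m n :: complex mat)"
  by (rule eq_matI) auto

lemma unitary_matD:
  assumes "unitary_mat n U"
  shows "U \<in> carrier_mat n n" "mat_adjoint U \<in> carrier_mat n n"
    "U * mat_adjoint U = 1\<^sub>m n" "mat_adjoint U * U = 1\<^sub>m n"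
  using assms by (auto simp: unitary_mat_def)

lemma unitary_mat_cancel:
  assumes "unitary_mat n U" "X \<in> carrier_mat n k"
  shows "mat_adjoint U * (U * X) = X" "U * (mat_adjoint U * X) = X"
  using unitary_matD[OF assms(1)] assms(2)
  by (simp_all flip: assoc_mult_mat[of _ n n _ n _ k])

lemma unitary_one: "unitary_mat n (1\<^sub>m n)"
  unfolding unitary_mat_def by simp

lemma unitary_mult:
  assumes U: "unitary_mat n U" and V: "unitary_mat n V"
  shows "unitary_mat n (U * V)"
  using unitary_matD[OF U] unitary_matD[OF V]
    unitary_mat_cancel[OF U, of _ n] unitary_mat_cancel[OF V, of _ n]
  unfolding unitary_mat_def
  by (simp add: mat_adjoint_mult[of _ n n _ n] assoc_mult_mat[of _ n n _ n _ n]
      mult_carrier_mat[of _ n n _ n])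

section \<open>Matrices with a prescribed unitary eigenbasis\<close>

definition diag_fun_mat :: "nat \<Rightarrow> (nat \<Rightarrow> complex) \<Rightarrow> complex mat" where
  "diag_fun_mat n g = mat n n (\<lambda>(i,j). if i = j then g i else 0)"

definition spectral_mat :: "nat \<Rightarrow> complex mat \<Rightarrow> (nat \<Rightarrow> complex) \<Rightarrow> complex mat" where
  "spectral_mat n U g = U * diag_fun_mat n g * mat_adjoint U"

lemma diag_fun_mat_carrier [simp]: "diag_fun_mat n g \<in> carrier_mat n n"
  unfolding diag_fun_mat_def by simp

lemma diag_fun_mat_dims [simp]: "dim_row (diag_fun_mat n g) = n" "dim_col (diag_fun_mat n g) = n"
  unfolding diag_fun_mat_def by simp_all

lemma diag_fun_mat_index [simp]:
  "i < n \<Longrightarrow> j < n \<Longrightarrow> diag_fun_mat n g $$ (i,j) = (if i = j then g i else 0)"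
  unfolding diag_fun_mat_def by simp

lemma diag_fun_mat_cong: "(\<And>a. a < n \<Longrightarrow> g a = h a) \<Longrightarrow> diag_fun_mat n g = diag_fun_mat n h"
  by (rule eq_matI) auto

lemma diag_fun_mat_mult: "diag_fun_mat n g * diag_fun_mat n h = diag_fun_mat n (\<lambda>a. g a * h a)"
  by (rule eq_matI)
    (simp_all add: index_mult_mat_sum if_distrib del: index_mult_mat(1) cong: if_cong)

lemma diag_fun_mat_mult_left:
  "W \<in> carrier_mat n n \<Longrightarrow> i < n \<Longrightarrow> j < n \<Longrightarrow> (diag_fun_mat n g * W) $$ (i,j) = g i * W $$ (i,j)"
  by (simp add: index_mult_mat_sum if_distrib[where f = "\<lambda>x. x * _"] del: index_mult_mat(1) cong: if_cong)

lemma diag_fun_mat_mult_right: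
  "W \<in> carrier_mat n n \<Longrightarrow> i < n \<Longrightarrow> j < n \<Longrightarrow> (W * diag_fun_mat n g) $$ (i,j) = W $$ (i,j) * g j"
  by (simp add: index_mult_mat_sum if_distrib[where f = "\<lambda>x. _ * x"] del: index_mult_mat(1) cong: if_cong)

lemma spectral_mat_carrier [simp]: "U \<in> carrier_mat n n \<Longrightarrow> spectral_mat n U g \<in> carrier_mat n n"
  unfolding spectral_mat_def by (meson mat_adjoint_carrier diag_fun_mat_carrier mult_carrier_mat)

lemma spectral_mat_dims [simp]:
  "dim_row (spectral_mat n U g) = dim_row U" "dim_col (spectral_mat n U g) = dim_row U"
  unfolding spectral_mat_def by simp_all

lemma spectral_mat_index:
  assumes "U \<in> carrier_mat n n" "i < n" "j < n"
  shows "spectral_mat n U g $$ (i,j) = (\<Sum>a<n. U $$ (i,a) * g a * cnj (U $$ (j,a)))"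
  using assms unfolding spectral_mat_def
  by (simp add: index_mult_mat_sum[of i "U * diag_fun_mat n g"] diag_fun_mat_mult_right
      del: index_mult_mat(1))

lemma spectral_mat_eqI:
  assumes "U \<in> carrier_mat n n" "A \<in> carrier_mat n n"
    and "\<And>i j. i < n \<Longrightarrow> j < n \<Longrightarrow> A $$ (i,j) = (\<Sum>a<n. U $$ (i,a) * g a * cnj (U $$ (j,a)))"
  shows "A = spectral_mat n U g"
  by (rule eq_matI) (use assms in \<open>auto simp: spectral_mat_index\<close>)

lemma spectral_mat_mult:
  assumes U: "unitary_mat n U"
  shows "spectral_mat n U g * spectral_mat n U h = spectral_mat n U (\<lambda>a. g a * h a)"
proof -
  note u = unitary_matD[OF U]
  have "spectral_mat n U g * spectral_mat n U h
      = U * (diag_fun_mat n g * (mat_adjoint U * (U * (diag_fun_mat n h * mat_adjoint U))))"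
    unfolding spectral_mat_def using u
    by (simp add: assoc_mult_mat[of _ n n _ n _ n] mult_carrier_mat[of _ n n _ n])
  also have "\<dots> = U * (diag_fun_mat n g * diag_fun_mat n h * mat_adjoint U)"
    using u by (simp add: unitary_mat_cancel[OF U, of _ n] assoc_mult_mat[of _ n n _ n _ n]
        mult_carrier_mat[of _ n n _ n])
  finally show ?thesis
    unfolding spectral_mat_def diag_fun_mat_mult
    using u by (simp add: assoc_mult_mat[of _ n n _ n _ n])
qed

lemma spectral_mat_const_one:
  assumes "unitary_mat n U"
  shows "spectral_mat n U (\<lambda>_. 1) = 1\<^sub>m n"
proof -
  have "diag_fun_mat n (\<lambda>_. 1) = 1\<^sub>m n"
    by (rule eq_matI) auto
  then show ?thesis
    using unitary_matD[OF assms] unfolding spectral_mat_def by simp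
qed

lemma spectral_mat_adjoint:
  assumes "U \<in> carrier_mat n n"
  shows "mat_adjoint (spectral_mat n U g) = spectral_mat n U (\<lambda>a. cnj (g a))"
  by (rule spectral_mat_eqI[OF assms]) (use assms in \<open>auto simp: spectral_mat_index mult_ac\<close>)

lemma spectral_mat_smult:
  assumes "U \<in> carrier_mat n n"
  shows "c \<cdot>\<^sub>m spectral_mat n U g = spectral_mat n U (\<lambda>a. c * g a)"
  by (rule spectral_mat_eqI[OF assms])
    (use assms in \<open>auto simp: spectral_mat_index sum_distrib_left mult_ac\<close>)

lemma spectral_mat_pow:
  assumes "unitary_mat n U"
  shows "spectral_mat n U g ^\<^sub>m k = spectral_mat n U (\<lambda>a. g a ^ k)"
proof (induction k)
  case 0
  then show ?case
    using unitary_matD(1)[OF assms] spectral_mat_const_one[OF assms] by simp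
next
  case (Suc k)
  then show ?case by (simp add: spectral_mat_mult[OF assms] mult.commute)
qed

lemma mat_exp_carrier [simp]: "A \<in> carrier_mat n n \<Longrightarrow> mat_exp A \<in> carrier_mat n n"
  unfolding mat_exp_def by simp

lemma mat_exp_spectral_mat:
  assumes U: "unitary_mat n U"
  shows "mat_exp (spectral_mat n U g) = spectral_mat n U (\<lambda>a. exp (g a))"
proof (rule spectral_mat_eqI)
  note u = unitary_matD[OF U]
  show "mat_exp (spectral_mat n U g) \<in> carrier_mat n n"
    unfolding mat_exp_def using u by simp
  fix i j assume ij: "i < n" "j < n"
  have term_sums: "(\<lambda>k. U $$ (i,a) * g a ^ k * cnj (U $$ (j,a)) / fact k)
      sums (U $$ (i,a) * exp (g a) * cnj (U $$ (j,a)))" for a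
  proof -
    have "(\<lambda>k. g a ^ k / fact k) sums exp (g a)"
      using exp_converges[of "g a"] by (simp add: scaleR_conv_of_real divide_inverse mult.commute)
    from sums_mult[OF sums_mult2[OF this, of "cnj (U $$ (j,a))"], of "U $$ (i,a)"]
    show ?thesis by (simp add: mult_ac)
  qed
  have "mat_exp (spectral_mat n U g) $$ (i,j)
      = (\<Sum>k. \<Sum>a<n. U $$ (i,a) * g a ^ k * cnj (U $$ (j,a)) / fact k)"
    unfolding mat_exp_def using u ij
    by (simp add: spectral_mat_pow[OF U] spectral_mat_index sum_divide_distrib)
  also have "\<dots> = (\<Sum>a<n. U $$ (i,a) * exp (g a) * cnj (U $$ (j,a)))"
    by (rule sums_unique[symmetric]) (rule sums_sum[OF term_sums])
  finally show "mat_exp (spectral_mat n U g) $$ (i,j) = (\<Sum>a<n. U $$ (i,a) * exp (g a) * cnj (U $$ (j,a)))" .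
qed (use U unitary_matD in auto)

lemma spectral_mat_conj:
  assumes W: "unitary_mat n W" and V: "unitary_mat n V"
  shows "W * spectral_mat n V g * mat_adjoint W = spectral_mat n (W * V) g"
  using unitary_matD[OF W] unitary_matD[OF V] unfolding spectral_mat_def
  by (simp add: mat_adjoint_mult[of _ n n _ n] assoc_mult_mat[of _ n n _ n _ n]
      mult_carrier_mat[of _ n n _ n])

text \<open>Two unitary diagonalisations of the same matrix are intertwined by \<open>W = U\<^sup>* V\<close>,
  which only connects eigenvectors with equal eigenvalues. This is what makes \<open>herm_fun\<close>
  independent of the choice made by \<open>SOME\<close>.\<close>
lemma real_spectral_mat_fun_eq:
  assumes U: "unitary_mat n U" and V: "unitary_mat n V"
    and eq: "spectral_mat n U (\<lambda>a. of_real (l a)) = spectral_mat n V (\<lambda>a. of_real (l' a))"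
  shows "spectral_mat n U (\<lambda>a. of_real (f (l a))) = spectral_mat n V (\<lambda>a. of_real (f (l' a)))"
proof -
  note u = unitary_matD[OF U] and v = unitary_matD[OF V]
  note simps = assoc_mult_mat[of _ n n _ n _ n] mult_carrier_mat[of _ n n _ n]
    unitary_mat_cancel[OF U, of _ n] unitary_mat_cancel[OF V, of _ n] u v
  define W where "W = mat_adjoint U * V"
  have W: "W \<in> carrier_mat n n" unfolding W_def using u(2) v(1) by (rule mult_carrier_mat)
  have intertwine: "diag_fun_mat n (\<lambda>a. h (l a)) * W = W * diag_fun_mat n (\<lambda>a. h (l' a))"
    if "diag_fun_mat n (\<lambda>a. of_real (l a)) * W = W * diag_fun_mat n (\<lambda>a. of_real (l' a))"
    for h :: "real \<Rightarrow> complex"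
  proof (rule eq_matI)
    fix i j assume "i < dim_row (W * diag_fun_mat n (\<lambda>a. h (l' a)))"
      "j < dim_col (W * diag_fun_mat n (\<lambda>a. h (l' a)))"
    then have ij: "i < n" "j < n" using W by auto
    have "of_real (l i) * W $$ (i,j) = W $$ (i,j) * of_real (l' j)"
      using arg_cong[OF that, of "\<lambda>M. M $$ (i,j)"]
      by (simp add: diag_fun_mat_mult_left[OF W ij] diag_fun_mat_mult_right[OF W ij])
    then have "W $$ (i,j) = 0 \<or> l i = l' j" by (auto simp: mult.commute)
    then show "(diag_fun_mat n (\<lambda>a. h (l a)) * W) $$ (i,j) = (W * diag_fun_mat n (\<lambda>a. h (l' a))) $$ (i,j)"
      using diag_fun_mat_mult_left[OF W ij] diag_fun_mat_mult_right[OF W ij] by auto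
  qed (use W in auto)
  have diag_conj: "diag_fun_mat n (\<lambda>a. h (l a)) * W = mat_adjoint U * spectral_mat n U (\<lambda>a. h (l a)) * V"
    "W * diag_fun_mat n (\<lambda>a. h (l' a)) = mat_adjoint U * spectral_mat n V (\<lambda>a. h (l' a)) * V" for h
    unfolding W_def spectral_mat_def using u v by (simp_all add: simps)
  have unconj: "U * (mat_adjoint U * X * V) * mat_adjoint V = X" if "X \<in> carrier_mat n n" for X
    using that u v by (simp add: simps)
  have "diag_fun_mat n (\<lambda>a. of_real (f (l a))) * W = W * diag_fun_mat n (\<lambda>a. of_real (f (l' a)))"
    by (rule intertwine) (simp add: diag_conj eq)
  then have "U * (mat_adjoint U * spectral_mat n U (\<lambda>a. of_real (f (l a))) * V) * mat_adjoint V
      = U * (mat_adjoint U * spectral_mat n V (\<lambda>a. of_real (f (l' a))) * V) * mat_adjoint V"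
    using diag_conj[of "\<lambda>x. of_real (f x)"] by simp
  then show ?thesis using u v by (simp add: unconj)
qed

lemma real_diagonal_mat_eq_diag_fun_mat:
  assumes "D \<in> carrier_mat n n" "diagonal_mat D" "\<forall>i<n. D $$ (i,i) \<in> \<real>"
  shows "D = diag_fun_mat n (\<lambda>a. of_real (Re (D $$ (a,a))))"
  by (rule eq_matI)
    (use assms in \<open>auto simp: diagonal_mat_def complex_is_Real_iff complex_eq_iff\<close>)

lemma herm_fun_real_spectral_mat:
  assumes U: "unitary_mat n U"
  shows "herm_fun f (spectral_mat n U (\<lambda>a. of_real (l a))) = spectral_mat n U (\<lambda>a. of_real (f (l a)))"
proof -
  let ?A = "spectral_mat n U (\<lambda>a. of_real (l a))"
  have dim: "dim_row ?A = n" using unitary_matD(1)[OF U] by simp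
  have fun_diag: "mat n n (\<lambda>(i,j). if i = j then complex_of_real (f (Re (D $$ (i,i)))) else 0)
      = diag_fun_mat n (\<lambda>a. of_real (f (Re (D $$ (a,a)))))" for D
    unfolding diag_fun_mat_def by simp
  let ?P = "\<lambda>B. \<exists>V D. unitary_mat n V \<and> D \<in> carrier_mat n n
      \<and> diagonal_mat D \<and> (\<forall>i < n. D $$ (i,i) \<in> \<real>)
      \<and> ?A = V * D * mat_adjoint V
      \<and> B = V * mat n n (\<lambda>(i,j). if i = j then complex_of_real (f (Re (D $$ (i,i)))) else 0)
            * mat_adjoint V"
  have "?P (spectral_mat n U (\<lambda>a. of_real (f (l a))))"
    by (rule exI[of _ U], rule exI[of _ "diag_fun_mat n (\<lambda>a. of_real (l a))"])
      (simp add: U fun_diag diagonal_mat_def spectral_mat_def cong: diag_fun_mat_cong)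
  moreover have "B = spectral_mat n U (\<lambda>a. of_real (f (l a)))" if "?P B" for B
  proof -
    from that obtain V D where V: "unitary_mat n V" and D: "D \<in> carrier_mat n n" "diagonal_mat D"
      "\<forall>i < n. D $$ (i,i) \<in> \<real>" and AV: "?A = V * D * mat_adjoint V"
      and B: "B = V * mat n n (\<lambda>(i,j). if i = j then complex_of_real (f (Re (D $$ (i,i)))) else 0)
            * mat_adjoint V"
      by blast
    have "?A = spectral_mat n V (\<lambda>a. of_real (Re (D $$ (a,a))))"
      using AV real_diagonal_mat_eq_diag_fun_mat[OF D] unfolding spectral_mat_def by metis
    from real_spectral_mat_fun_eq[OF U V this, of f]
    show ?thesis unfolding B fun_diag spectral_mat_def by simp
  qed
  ultimately show ?thesis
    unfolding herm_fun_def dim by (rule someI2)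
qed

section \<open>Direct sums\<close>

lemma dsum_mat_dims [simp]:
  "dim_row (dsum_mat A B) = dim_row A + dim_row B" "dim_col (dsum_mat A B) = dim_col A + dim_col B"
  unfolding dsum_mat_def by simp_all

lemma dsum_mat_carrier [simp]:
  "A \<in> carrier_mat n n \<Longrightarrow> B \<in> carrier_mat m m \<Longrightarrow> dsum_mat A B \<in> carrier_mat (n+m) (n+m)"
  unfolding dsum_mat_def by (rule four_block_carrier_mat)

lemma dsum_mat_index:
  assumes "i < dim_row A + dim_row B" "j < dim_col A + dim_col B"
  shows "dsum_mat A B $$ (i,j) =
    (if i < dim_row A then if j < dim_col A then A $$ (i,j) else 0
     else if j < dim_col A then 0 else B $$ (i - dim_row A, j - dim_col A))"
  using assms unfolding dsum_mat_def by simp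

lemma dsum_mat_mult:
  assumes "A \<in> carrier_mat n n" "B \<in> carrier_mat m m" "C \<in> carrier_mat n n" "D \<in> carrier_mat m m"
  shows "dsum_mat A B * dsum_mat C D = dsum_mat (A * C) (B * D)"
proof -
  have "dsum_mat A B * dsum_mat C D = four_block_mat (A * C + 0\<^sub>m n m * 0\<^sub>m m n)
      (A * 0\<^sub>m n m + 0\<^sub>m n m * D) (0\<^sub>m m n * C + B * 0\<^sub>m m n) (0\<^sub>m m n * 0\<^sub>m n m + B * D)"
    unfolding dsum_mat_def carrier_matD[OF assms(1)] carrier_matD[OF assms(2)]
      carrier_matD[OF assms(3)] carrier_matD[OF assms(4)]
    using assms by (intro mult_four_block_mat) auto
  then show ?thesis
    unfolding dsum_mat_def using assms by simp
qed

lemma dsum_mat_one: "dsum_mat (1\<^sub>m n) (1\<^sub>m m) = 1\<^sub>m (n+m)"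
  unfolding dsum_mat_def by simp

lemma dsum_mat_add:
  assumes "A \<in> carrier_mat n n" "B \<in> carrier_mat m m" "C \<in> carrier_mat n n" "D \<in> carrier_mat m m"
  shows "dsum_mat A B + dsum_mat C D = dsum_mat (A + C) (B + D)"
  by (rule eq_matI) (use assms in \<open>auto simp: dsum_mat_index\<close>)

lemma dsum_mat_smult:
  assumes "A \<in> carrier_mat n n" "B \<in> carrier_mat m m"
  shows "c \<cdot>\<^sub>m dsum_mat A B = dsum_mat (c \<cdot>\<^sub>m A) (c \<cdot>\<^sub>m B)"
  by (rule eq_matI) (use assms in \<open>auto simp: dsum_mat_index\<close>)

lemma dsum_mat_adjoint:
  assumes "A \<in> carrier_mat n n" "B \<in> carrier_mat m m"
  shows "mat_adjoint (dsum_mat A B) = dsum_mat (mat_adjoint A) (mat_adjoint B)"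
  by (rule eq_matI) (use assms in \<open>auto simp: dsum_mat_index\<close>)

lemma dsum_mat_eq_iff:
  assumes "A \<in> carrier_mat n n" "B \<in> carrier_mat m m" "C \<in> carrier_mat n n" "D \<in> carrier_mat m m"
  shows "dsum_mat A B = dsum_mat C D \<longleftrightarrow> A = C \<and> B = D"
proof
  assume eq: "dsum_mat A B = dsum_mat C D"
  have "A = C"
  proof (rule eq_matI)
    fix i j assume "i < dim_row C" "j < dim_col C"
    then show "A $$ (i,j) = C $$ (i,j)"
      using arg_cong[OF eq, of "\<lambda>M. M $$ (i,j)"] assms by (simp add: dsum_mat_index)
  qed (use assms in auto)
  moreover have "B = D"
  proof (rule eq_matI)
    fix i j assume "i < dim_row D" "j < dim_col D"
    then show "B $$ (i,j) = D $$ (i,j)"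
      using arg_cong[OF eq, of "\<lambda>M. M $$ (i+n,j+n)"] assms by (simp add: dsum_mat_index)
  qed (use assms in auto)
  ultimately show "A = C \<and> B = D" ..
qed simp

lemma hermitian_dsum_mat:
  "hermitian_mat n A \<Longrightarrow> hermitian_mat m B \<Longrightarrow> hermitian_mat (n+m) (dsum_mat A B)"
  unfolding hermitian_mat_def by (auto simp: dsum_mat_adjoint)

lemma unitary_dsum_mat:
  assumes "unitary_mat n U" "unitary_mat m V"
  shows "unitary_mat (n+m) (dsum_mat U V)"
  using unitary_matD[OF assms(1)] unitary_matD[OF assms(2)] unfolding unitary_mat_def
  by (simp add: dsum_mat_adjoint dsum_mat_mult[of _ n _ m] dsum_mat_one)

lemma dsum_spectral_mat:
  assumes "unitary_mat n U" "unitary_mat m V"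
  shows "dsum_mat (spectral_mat n U g) (spectral_mat m V h)
    = spectral_mat (n+m) (dsum_mat U V) (\<lambda>a. if a < n then g a else h (a - n))"
proof -
  have diag: "dsum_mat (diag_fun_mat n g) (diag_fun_mat m h)
      = diag_fun_mat (n+m) (\<lambda>a. if a < n then g a else h (a - n))"
    by (rule eq_matI) (auto simp: dsum_mat_index)
  show ?thesis
    using unitary_matD[OF assms(1)] unitary_matD[OF assms(2)] unfolding spectral_mat_def
    by (simp add: diag[symmetric] dsum_mat_adjoint dsum_mat_mult[of _ n _ m] mult_carrier_mat[of _ n n _ n]
        mult_carrier_mat[of _ m m _ m])
qed

lemma dsum_mat_pow:
  assumes "A \<in> carrier_mat n n" "B \<in> carrier_mat m m"
  shows "dsum_mat A B ^\<^sub>m k = dsum_mat (A ^\<^sub>m k) (B ^\<^sub>m k)"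
  by (induction k) (use assms in \<open>simp_all add: dsum_mat_one dsum_mat_mult[of _ n _ m]\<close>)

lemma mat_exp_dsum_mat:
  assumes A: "A \<in> carrier_mat n n" and B: "B \<in> carrier_mat m m"
  shows "mat_exp (dsum_mat A B) = dsum_mat (mat_exp A) (mat_exp B)"
proof (rule eq_matI)
  fix i j assume "i < dim_row (dsum_mat (mat_exp A) (mat_exp B))"
    "j < dim_col (dsum_mat (mat_exp A) (mat_exp B))"
  then have ij: "i < n + m" "j < n + m" using A B by (simp_all add: mat_exp_def)
  then have "mat_exp (dsum_mat A B) $$ (i,j)
      = (\<Sum>k. dsum_mat (A ^\<^sub>m k) (B ^\<^sub>m k) $$ (i,j) / of_nat (fact k))"
    using A B by (simp add: mat_exp_def dsum_mat_pow)
  also have "\<dots> = dsum_mat (mat_exp A) (mat_exp B) $$ (i,j)"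
    using ij A B carrier_matD[OF pow_carrier_mat[OF A]] carrier_matD[OF pow_carrier_mat[OF B]]
    by (simp add: dsum_mat_index mat_exp_def)
  finally show "mat_exp (dsum_mat A B) $$ (i,j) = dsum_mat (mat_exp A) (mat_exp B) $$ (i,j)" .
qed (use A B in \<open>simp_all add: mat_exp_def\<close>)

section \<open>The spectral theorem for Hermitian matrices\<close>

lemma cscalar_prod_smult:
  fixes v w :: "complex vec"
  assumes "v \<in> carrier_vec n" "w \<in> carrier_vec n"
  shows "(a \<cdot>\<^sub>v v) \<bullet>c (b \<cdot>\<^sub>v w) = a * cnj b * (v \<bullet>c w)"
  using assms by (simp add: conjugate_smult_vec)

lemma cscalar_prod_self_pos:
  fixes v :: "complex vec"
  assumes "v \<in> carrier_vec n" "v \<noteq> 0\<^sub>v n"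
  shows "v \<bullet>c v = of_real (Re (v \<bullet>c v))" "Re (v \<bullet>c v) > 0"
proof -
  have "v \<bullet>c v > 0" using assms by simp
  then show "v \<bullet>c v = of_real (Re (v \<bullet>c v))" "Re (v \<bullet>c v) > 0"
    by (auto simp: less_complex_def complex_eq_iff)
qed

definition normalize_cvec :: "complex vec \<Rightarrow> complex vec" where
  "normalize_cvec v = complex_of_real (1 / sqrt (Re (v \<bullet>c v))) \<cdot>\<^sub>v v"

lemma normalize_cvec_carrier [simp]: "v \<in> carrier_vec n \<Longrightarrow> normalize_cvec v \<in> carrier_vec n"
  unfolding normalize_cvec_def by simp

lemma normalize_cvec_unit:
  assumes "v \<in> carrier_vec n" "v \<noteq> 0\<^sub>v n"
  shows "normalize_cvec v \<bullet>c normalize_cvec v = 1"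
proof -
  obtain r where r: "v \<bullet>c v = of_real r" "r > 0"
    using cscalar_prod_self_pos[OF assms] by blast
  have "normalize_cvec v \<bullet>c normalize_cvec v
      = of_real (1 / sqrt r) * cnj (of_real (1 / sqrt r)) * of_real r"
    unfolding normalize_cvec_def cscalar_prod_smult[OF assms(1) assms(1)] r Re_complex_of_real ..
  also have "\<dots> = of_real (1 / sqrt r * (1 / sqrt r) * r)"
    by (simp only: complex_cnj_complex_of_real of_real_mult)
  also have "1 / sqrt r * (1 / sqrt r) * r = 1"
    using r(2) by (simp add: field_simps)
  finally show ?thesis by simp
qed

lemma normalize_cvec_id: "v \<bullet>c v = 1 \<Longrightarrow> normalize_cvec v = v"
  unfolding normalize_cvec_def by simp

lemma unitary_mat_of_cols:
  fixes ws :: "complex vec list"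
  assumes ws: "set ws \<subseteq> carrier_vec n" "length ws = n"
    and orthonormal: "\<And>i j. i < n \<Longrightarrow> j < n \<Longrightarrow> ws ! j \<bullet>c ws ! i = (if i = j then 1 else 0)"
  shows "unitary_mat n (mat_of_cols n ws)"
proof -
  let ?W = "mat_of_cols n ws"
  have W: "?W \<in> carrier_mat n n" using ws by (metis mat_of_cols_carrier(1))
  have adj_W: "mat_adjoint ?W * ?W = 1\<^sub>m n"
  proof (rule eq_matI)
    fix i j assume "i < dim_row (1\<^sub>m n)" "j < dim_col (1\<^sub>m n)"
    then have ij: "i < n" "j < n" by auto
    moreover have "dim_vec (ws ! k) = n" if "k < n" for k
      using ws that by (auto dest!: nth_mem)
    ultimately have "(mat_adjoint ?W * ?W) $$ (i,j) = ws ! j \<bullet>c ws ! i"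
      using W ws by (auto simp: index_mult_mat_sum scalar_prod_def mat_of_cols_def atLeast0LessThan
          mult.commute intro!: sum.cong simp del: index_mult_mat(1))
    then show "(mat_adjoint ?W * ?W) $$ (i,j) = 1\<^sub>m n $$ (i,j)"
      using orthonormal[OF ij] ij by simp
  qed (use W in auto)
  moreover have "?W * mat_adjoint ?W = 1\<^sub>m n"
    using mat_mult_left_right_inverse[OF mat_adjoint_carrier[OF W] W adj_W] .
  ultimately show ?thesis using W unfolding unitary_mat_def by blast
qed

text \<open>Complete \<open>u\<close> to a basis, orthogonalise by Gram--Schmidt (which keeps \<open>u\<close> first)
  and normalise.\<close>
lemma unit_vec_extends_to_unitary:
  fixes u :: "complex vec"
  assumes u: "u \<in> carrier_vec n" and u1: "u \<bullet>c u = 1"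
  shows "\<exists>W. unitary_mat n W \<and> col W 0 = u"
proof -
  interpret cof_vec_space n "TYPE(complex)" .
  have u0: "u \<noteq> 0\<^sub>v n" using u1 u by auto
  have n: "n > 0" using u u1 by (cases n) (auto simp: scalar_prod_def)
  define b where "b = basis_completion u"
  from basis_completion[OF u u0, folded b_def]
  have b: "distinct b" "\<not> lin_dep (set b)" "set b \<subseteq> carrier_vec n" "length b = n" "hd b = u"
    by auto
  then obtain vs where bv: "b = u # vs" using n by (cases b) auto
  define ws where "ws = gram_schmidt n b"
  from gram_schmidt_result[OF b(3,1,2) refl, folded ws_def]
  have wsc: "set ws \<subseteq> carrier_vec n" and orth: "corthogonal ws" and len: "length ws = n"
    using b by auto
  have ws_i: "ws ! i \<in> carrier_vec n" if "i < n" for i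
    using wsc len that by auto
  have ws_nz: "ws ! i \<noteq> 0\<^sub>v n" if "i < n" for i
    using corthogonalD[OF orth, of i i] that len by auto
  have "hd ws = u" unfolding ws_def bv by (rule gram_schmidt_hd[OF u])
  then have ws0: "ws ! 0 = u" using len n by (cases ws) auto
  define ws' where "ws' = map normalize_cvec ws"
  have "ws' ! j \<bullet>c ws' ! i = (if i = j then 1 else 0)" if ij: "i < n" "j < n" for i j
  proof (cases "i = j")
    case True
    then show ?thesis
      using normalize_cvec_unit[OF ws_i ws_nz] ij len by (simp add: ws'_def)
  next
    case False
    then have "ws ! j \<bullet>c ws ! i = 0" using corthogonalD[OF orth, of j i] False ij len by auto
    then show ?thesis
      using False ij len
      by (simp add: ws'_def normalize_cvec_def cscalar_prod_smult[OF ws_i[OF ij(2)] ws_i[OF ij(1)]])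
  qed
  then have "unitary_mat n (mat_of_cols n ws')"
    by (intro unitary_mat_of_cols) (use wsc len in \<open>auto simp: ws'_def\<close>)
  moreover have "col (mat_of_cols n ws') 0 = u"
    using n len ws_i[OF n] ws0 normalize_cvec_id[OF u1] by (simp add: ws'_def)
  ultimately show ?thesis by blast
qed

lemma unit_eigenvector_exists:
  fixes A :: "complex mat"
  assumes A: "A \<in> carrier_mat n n" and n: "n > 0"
  shows "\<exists>e u. u \<in> carrier_vec n \<and> u \<bullet>c u = 1 \<and> A *\<^sub>v u = e \<cdot>\<^sub>v u"
proof -
  have "degree (char_poly A) > 0" using degree_monic_char_poly[OF A] n by auto
  then have "\<not> constant (poly (char_poly A))" by (simp add: constant_degree)
  then obtain e where "poly (char_poly A) e = 0" using fundamental_theorem_of_algebra by blast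
  then have "eigenvalue A e" using eigenvalue_root_char_poly[OF A] by simp
  then obtain v where v: "v \<in> carrier_vec n" "v \<noteq> 0\<^sub>v n" and Av: "A *\<^sub>v v = e \<cdot>\<^sub>v v"
    unfolding eigenvalue_def eigenvector_def using A by auto
  have "A *\<^sub>v normalize_cvec v = e \<cdot>\<^sub>v normalize_cvec v"
    unfolding normalize_cvec_def using mult_mat_vec[OF A v(1)] Av v
    by (simp add: smult_smult_assoc mult.commute)
  then show ?thesis using normalize_cvec_unit[OF v] normalize_cvec_carrier[OF v(1)] by blast
qed

lemma unitary_conj_eigenvector_col:
  assumes W: "unitary_mat n W" and A: "A \<in> carrier_mat n n" and n: "n > 0"
    and u: "col W 0 = u" and Au: "A *\<^sub>v u = e \<cdot>\<^sub>v u"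
  shows "col (mat_adjoint W * A * W) 0 = e \<cdot>\<^sub>v unit_vec n 0"
proof -
  note w = unitary_matD[OF W]
  have uc: "u \<in> carrier_vec n" using u w(1) by auto
  have "col (mat_adjoint W * A * W) 0 = (mat_adjoint W * A) *\<^sub>v col W 0"
    by (rule col_mult2[of _ n n _ n 0]) (use w A n in \<open>simp_all add: mult_carrier_mat[of _ n n _ n]\<close>)
  also have "\<dots> = mat_adjoint W *\<^sub>v (A *\<^sub>v u)"
    unfolding u using w A uc by (simp add: assoc_mult_mat_vec[of _ n n _ n])
  also have "\<dots> = e \<cdot>\<^sub>v (mat_adjoint W *\<^sub>v col W 0)"
    unfolding Au u by (rule mult_mat_vec[OF w(2) uc])
  also have "mat_adjoint W *\<^sub>v col W 0 = col (mat_adjoint W * W) 0"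
    by (rule col_mult2[symmetric, of _ n n _ n 0]) (use w n in simp_all)
  finally show ?thesis using w n by simp
qed

text \<open>The first row mirrors the first column, and \<open>e\<close> is real as a diagonal entry.\<close>
lemma hermitian_first_col_split:
  assumes B: "hermitian_mat (Suc m) B" and col0: "col B 0 = e \<cdot>\<^sub>v unit_vec (Suc m) 0"
  shows "\<exists>x C. hermitian_mat m C \<and> B = dsum_mat (mat 1 1 (\<lambda>_. complex_of_real x)) C"
proof -
  have Bc: "B \<in> carrier_mat (Suc m) (Suc m)" and hB: "mat_adjoint B = B"
    using B unfolding hermitian_mat_def by auto
  have Bsym: "B $$ (i,j) = cnj (B $$ (j,i))" if "i < Suc m" "j < Suc m" for i j
    using arg_cong[OF hB, of "\<lambda>M. M $$ (i,j)"] Bc that by simp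
  have Bi0: "B $$ (i,0) = (if i = 0 then e else 0)" if "i < Suc m" for i
    using arg_cong[OF col0, of "\<lambda>v. v $ i"] Bc that by simp
  have e_real: "e = complex_of_real (Re e)"
    using Bsym[of 0 0] Bi0[of 0] by (simp add: complex_eq_iff)
  have B0j: "B $$ (0,j) = (if j = 0 then e else 0)" if "j < Suc m" for j
    using Bsym[of 0 j] Bi0[of j] that e_real by (auto simp: complex_eq_iff)
  define C where "C = mat m m (\<lambda>(i,j). B $$ (Suc i, Suc j))"
  have "hermitian_mat m C"
    unfolding hermitian_mat_def C_def by (auto intro!: eq_matI simp: Bsym[symmetric])
  moreover have "B = dsum_mat (mat 1 1 (\<lambda>_. complex_of_real (Re e))) C"
  proof (rule eq_matI)
    fix i j assume "i < dim_row (dsum_mat (mat 1 1 (\<lambda>_. complex_of_real (Re e))) C)"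
      "j < dim_col (dsum_mat (mat 1 1 (\<lambda>_. complex_of_real (Re e))) C)"
    then have ij: "i < Suc m" "j < Suc m" by (simp_all add: C_def)
    show "B $$ (i,j) = dsum_mat (mat 1 1 (\<lambda>_. complex_of_real (Re e))) C $$ (i,j)"
    proof (cases "i = 0 \<or> j = 0")
      case True
      then show ?thesis using ij B0j[of j] Bi0[of i] e_real by (auto simp: dsum_mat_index C_def)
    next
      case False
      then obtain i' j' where "i = Suc i'" "j = Suc j'" by (cases i; cases j) auto
      then show ?thesis using ij by (simp add: dsum_mat_index C_def)
    qed
  qed (use Bc in \<open>simp_all add: C_def\<close>)
  ultimately show ?thesis by blast
qed

lemma hermitian_unitary_conj:
  assumes A: "hermitian_mat n A" and W: "unitary_mat n W"
  shows "hermitian_mat n (mat_adjoint W * A * W)" "A = W * (mat_adjoint W * A * W) * mat_adjoint W"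
  using unitary_matD[OF W] A unitary_mat_cancel[OF W, of _ n] unfolding hermitian_mat_def
  by (simp_all add: mat_adjoint_mult[of _ n n _ n] mult_carrier_mat[of _ n n _ n]
      assoc_mult_mat[of _ n n _ n _ n] right_mult_one_mat[of _ n n])

lemma dsum_scalar_real_spectral_mat:
  assumes "unitary_mat m V"
  shows "dsum_mat (mat 1 1 (\<lambda>_. complex_of_real x)) (spectral_mat m V (\<lambda>a. of_real (l a)))
    = spectral_mat (Suc m) (dsum_mat (1\<^sub>m 1) V) (\<lambda>a. of_real (if a < 1 then x else l (a - 1)))"
proof -
  have one_by_one: "mat 1 1 (\<lambda>_. complex_of_real x) = spectral_mat 1 (1\<^sub>m 1) (\<lambda>_. of_real x)"
    by (rule spectral_mat_eqI) auto
  have "dsum_mat (mat 1 1 (\<lambda>_. complex_of_real x)) (spectral_mat m V (\<lambda>a. of_real (l a)))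
      = spectral_mat (1 + m) (dsum_mat (1\<^sub>m 1) V) (\<lambda>a. if a < 1 then of_real x else of_real (l (a - 1)))"
    unfolding one_by_one by (rule dsum_spectral_mat[OF unitary_one assms])
  then show ?thesis
    unfolding plus_1_eq_Suc by (simp only: if_distrib[of complex_of_real])
qed

theorem hermitian_spectral_decomposition:
  "hermitian_mat n A \<Longrightarrow> \<exists>U l. unitary_mat n U \<and> A = spectral_mat n U (\<lambda>a. of_real (l a))"
proof (induction n arbitrary: A)
  case 0
  then have "A = spectral_mat 0 (1\<^sub>m 0) (\<lambda>_. 0)"
    by (intro eq_matI) (auto simp: hermitian_mat_def)
  then show ?case using unitary_one[of 0] by fastforce
next
  case (Suc m)
  have A: "A \<in> carrier_mat (Suc m) (Suc m)"
    using Suc.prems unfolding hermitian_mat_def by auto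
  obtain e u where u: "u \<in> carrier_vec (Suc m)" "u \<bullet>c u = 1" and Au: "A *\<^sub>v u = e \<cdot>\<^sub>v u"
    using unit_eigenvector_exists[OF A] by blast
  obtain W where W: "unitary_mat (Suc m) W" and Wu: "col W 0 = u"
    using unit_vec_extends_to_unitary[OF u] by blast
  define B where "B = mat_adjoint W * A * W"
  have "col B 0 = e \<cdot>\<^sub>v unit_vec (Suc m) 0"
    unfolding B_def by (rule unitary_conj_eigenvector_col[OF W A _ Wu Au]) simp
  then obtain x C where C: "hermitian_mat m C"
    and BC: "B = dsum_mat (mat 1 1 (\<lambda>_. complex_of_real x)) C"
    using hermitian_first_col_split hermitian_unitary_conj(1)[OF Suc.prems W] unfolding B_def
    by blast
  obtain V l where V: "unitary_mat m V" and CV: "C = spectral_mat m V (\<lambda>a. of_real (l a))"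
    using Suc.IH[OF C] by blast
  have V': "unitary_mat (Suc m) (dsum_mat (1\<^sub>m 1) V)"
    using unitary_dsum_mat[OF unitary_one[of 1] V] by simp
  have "A = W * B * mat_adjoint W"
    unfolding B_def by (rule hermitian_unitary_conj(2)[OF Suc.prems W])
  then have "A = spectral_mat (Suc m) (W * dsum_mat (1\<^sub>m 1) V)
      (\<lambda>a. of_real (if a < 1 then x else l (a - 1)))"
    unfolding BC CV dsum_scalar_real_spectral_mat[OF V] spectral_mat_conj[OF W V'] .
  then show ?case
    by (intro exI conjI) (rule unitary_mult[OF W V'])
qed

section \<open>Exponentials and absolute values of Hermitian matrices\<close>

lemma mat_exp_smult_spectral_mat:
  assumes "unitary_mat n U"
  shows "mat_exp (c \<cdot>\<^sub>m spectral_mat n U g) = spectral_mat n U (\<lambda>a. exp (c * g a))"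
  using unitary_matD(1)[OF assms] by (simp add: spectral_mat_smult mat_exp_spectral_mat[OF assms])

lemma mat_exp_smult_hermitian_inverse:
  assumes "hermitian_mat n A"
  shows "mat_exp (c \<cdot>\<^sub>m A) * mat_exp (c \<cdot>\<^sub>m - A) = 1\<^sub>m n"
    "mat_exp (c \<cdot>\<^sub>m - A) * mat_exp (c \<cdot>\<^sub>m A) = 1\<^sub>m n"
proof -
  obtain U l where U: "unitary_mat n U" and AU: "A = spectral_mat n U (\<lambda>a. of_real (l a))"
    using hermitian_spectral_decomposition[OF assms] by blast
  have "- A = (- 1) \<cdot>\<^sub>m A"
    by (rule eq_matI) auto
  then have "c \<cdot>\<^sub>m - A = (- c) \<cdot>\<^sub>m A"
    using assms unfolding hermitian_mat_def by (auto intro!: eq_matI)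
  then show "mat_exp (c \<cdot>\<^sub>m A) * mat_exp (c \<cdot>\<^sub>m - A) = 1\<^sub>m n"
    "mat_exp (c \<cdot>\<^sub>m - A) * mat_exp (c \<cdot>\<^sub>m A) = 1\<^sub>m n"
    unfolding AU
    by (simp_all add: mat_exp_smult_spectral_mat[OF U] spectral_mat_mult[OF U]
        spectral_mat_const_one[OF U] flip: exp_add)
qed

text \<open>The imaginary part of \<open>c\<close> only contributes a unitary factor, which \<open>|_|\<close> removes.\<close>
lemma mat_abs_pow_mat_exp_hermitian:
  assumes "hermitian_mat n G"
  shows "mat_abs_pow (mat_exp (c \<cdot>\<^sub>m G)) r = mat_exp (complex_of_real (Re c * r) \<cdot>\<^sub>m G)"
proof -
  obtain U l where U: "unitary_mat n U" and GU: "G = spectral_mat n U (\<lambda>a. of_real (l a))"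
    using hermitian_spectral_decomposition[OF assms] by blast
  let ?X = "spectral_mat n U (\<lambda>a. exp (c * of_real (l a)))"
  have modulus: "cnj (exp (c * of_real x)) * exp (c * of_real x) = of_real (exp (Re c * x) ^ 2)"
    for x :: real
  proof -
    have "cnj (exp (c * of_real x)) * exp (c * of_real x) = exp (cnj (c * of_real x) + c * of_real x)"
      by (simp add: exp_add exp_cnj)
    also have "cnj (c * of_real x) + c * of_real x = of_real (2 * (Re c * x))"
      by (simp add: complex_eq_iff)
    finally show ?thesis by (simp only: exp_of_real exp_double)
  qed
  have "mat_adjoint ?X * ?X = spectral_mat n U (\<lambda>a. of_real (exp (Re c * l a) ^ 2))"
    using unitary_matD(1)[OF U]
    by (simp add: spectral_mat_adjoint spectral_mat_mult[OF U] modulus del: of_real_power)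
  then have "mat_abs ?X = spectral_mat n U (\<lambda>a. of_real (sqrt (exp (Re c * l a) ^ 2)))"
    unfolding mat_abs_def by (simp only: herm_fun_real_spectral_mat[OF U])
  then have "mat_abs ?X = spectral_mat n U (\<lambda>a. of_real (exp (Re c * l a)))"
    by simp
  then have "mat_abs_pow ?X r = spectral_mat n U (\<lambda>a. of_real (exp (Re c * r * l a)))"
    unfolding mat_abs_pow_def by (simp add: herm_fun_real_spectral_mat[OF U] powr_def mult_ac)
  then show ?thesis
    unfolding GU mat_exp_smult_spectral_mat[OF U] by (simp add: exp_of_real mult_ac flip: of_real_mult)
qed

section \<open>The measure \<open>\<beta>\<^sub>0\<close>\<close>

lemma beta0_density_eq: "pi / (2 * (cosh (pi * t) + 1)) = pi * exp (pi * t) / (exp (pi * t) + 1)^2"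
proof -
  have "cosh (pi * t) + 1 = (exp (pi * t) + 1)^2 / (2 * exp (pi * t))"
    by (simp add: cosh_def exp_minus field_simps power2_eq_square)
  then show ?thesis by simp
qed

text \<open>\<open>-1 / (exp (\<pi> t) + 1)\<close> is an antiderivative of the density.\<close>
lemma beta0_density_integral:
  defines "g \<equiv> \<lambda>t::real. pi * exp (pi * t) / (exp (pi * t) + 1)^2"
  shows "set_integrable lborel (einterval (-\<infinity>) \<infinity>) g" "(LBINT t=-\<infinity>..\<infinity>. g t) = 1"
proof -
  define F where "F t = - 1 / (exp (pi * t) + 1)" for t :: real
  have pos: "exp (pi * t) + 1 \<noteq> 0" for t :: real
    using exp_gt_zero[of "pi * t"] by linarith
  have "DERIV F t :> g t" for t
    unfolding F_def g_def by (auto intro!: derivative_eq_intros simp: pos power2_eq_square)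
  moreover have "isCont g t" for t
    unfolding g_def using pos[of t] by (intro continuous_intros) auto
  moreover have "((F \<circ> real_of_ereal) \<longlongrightarrow> -1) (at_right (-\<infinity>))"
    unfolding ereal_tendsto_simps F_def by real_asymp
  moreover have "((F \<circ> real_of_ereal) \<longlongrightarrow> 0) (at_left \<infinity>)"
    unfolding ereal_tendsto_simps F_def by real_asymp
  moreover have "AE t in lborel. -\<infinity> < ereal t \<longrightarrow> ereal t < \<infinity> \<longrightarrow> 0 \<le> g t"
    unfolding g_def by simp
  ultimately have "set_integrable lborel (einterval (-\<infinity>) \<infinity>) g \<and> (LBINT t=-\<infinity>..\<infinity>. g t) = 0 - (-1)"
    using interval_integral_FTC_nonneg[of "-\<infinity>" "\<infinity>" F g] by simp
  then show "set_integrable lborel (einterval (-\<infinity>) \<infinity>) g" "(LBINT t=-\<infinity>..\<infinity>. g t) = 1"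
    by simp_all
qed

lemma measure_beta0_space: "measure beta0 (space beta0) = 1"
proof -
  let ?g = "\<lambda>t::real. pi * exp (pi * t) / (exp (pi * t) + 1)^2"
  have "integrable lborel ?g" "integral\<^sup>L lborel ?g = 1"
    using beta0_density_integral
    by (simp_all add: set_integrable_def interval_lebesgue_integral_def set_lebesgue_integral_def)
  then have "(\<integral>\<^sup>+ t. ennreal (?g t) \<partial>lborel) = 1"
    by (subst nn_integral_eq_integral) auto
  then have "emeasure beta0 UNIV = 1"
    unfolding beta0_def beta0_density_eq by (subst emeasure_density) auto
  then show ?thesis
    unfolding measure_def by (simp add: beta0_def)
qed

section \<open>Commutators of linear combinations\<close>

definition lin_comb_mat :: "complex mat \<Rightarrow> complex mat \<Rightarrow> complex \<Rightarrow> complex \<Rightarrow> complex mat" where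
  "lin_comb_mat H K a b = a \<cdot>\<^sub>m H + b \<cdot>\<^sub>m K"

context
  fixes H K :: "complex mat" and d :: nat
  assumes HK: "H \<in> carrier_mat d d" "K \<in> carrier_mat d d"
begin

lemma lin_comb_mat_carrier [simp]: "lin_comb_mat H K a b \<in> carrier_mat d d"
  unfolding lin_comb_mat_def using HK by simp

lemma lin_comb_mat_dims [simp]:
  "dim_row (lin_comb_mat H K a b) = d" "dim_col (lin_comb_mat H K a b) = d"
  using carrier_matD[OF lin_comb_mat_carrier] by simp_all

lemma lin_comb_mat_index:
  "i < d \<Longrightarrow> j < d \<Longrightarrow> lin_comb_mat H K a b $$ (i,j) = a * H $$ (i,j) + b * K $$ (i,j)"
  unfolding lin_comb_mat_def using HK by simp

lemma lin_comb_mat_eqI: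
  assumes "X \<in> carrier_mat d d" "\<And>i j. i < d \<Longrightarrow> j < d \<Longrightarrow> X $$ (i,j) = a * H $$ (i,j) + b * K $$ (i,j)"
  shows "X = lin_comb_mat H K a b"
  by (rule eq_matI) (use assms lin_comb_mat_carrier in \<open>auto simp: lin_comb_mat_index\<close>)

lemma lin_comb_mat_basis:
  "H = lin_comb_mat H K 1 0" "K = lin_comb_mat H K 0 1"
  "- H = lin_comb_mat H K (-1) 0" "- K = lin_comb_mat H K 0 (-1)"
  by (rule lin_comb_mat_eqI; use HK in simp)+

lemma lin_comb_mat_add:
  "lin_comb_mat H K a b + lin_comb_mat H K c e = lin_comb_mat H K (a + c) (b + e)"
  by (rule lin_comb_mat_eqI) (use lin_comb_mat_carrier in \<open>simp_all add: lin_comb_mat_index algebra_simps\<close>)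

lemma dsum_lin_comb_mat_add:
  "dsum_mat (lin_comb_mat H K a b) (lin_comb_mat H K c e)
     + dsum_mat (lin_comb_mat H K a' b') (lin_comb_mat H K c' e')
   = dsum_mat (lin_comb_mat H K (a + a') (b + b')) (lin_comb_mat H K (c + c') (e + e'))"
  by (simp add: dsum_mat_add[of _ d _ d] lin_comb_mat_add)

lemma lin_comb_mat_mult_index:
  assumes "i < d" "j < d"
  shows "(lin_comb_mat H K a b * lin_comb_mat H K c e) $$ (i,j)
    = a * c * (H * H) $$ (i,j) + a * e * (H * K) $$ (i,j)
      + b * c * (K * H) $$ (i,j) + b * e * (K * K) $$ (i,j)"
proof -
  have "(lin_comb_mat H K a b * lin_comb_mat H K c e) $$ (i,j)
      = (\<Sum>k<d. (a * H $$ (i,k) + b * K $$ (i,k)) * (c * H $$ (k,j) + e * K $$ (k,j)))"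
    using assms by (simp add: index_mult_mat_sum lin_comb_mat_index del: index_mult_mat(1))
  also have "\<dots> = a * c * (\<Sum>k<d. H $$ (i,k) * H $$ (k,j)) + a * e * (\<Sum>k<d. H $$ (i,k) * K $$ (k,j))
      + b * c * (\<Sum>k<d. K $$ (i,k) * H $$ (k,j)) + b * e * (\<Sum>k<d. K $$ (i,k) * K $$ (k,j))"
    by (simp add: sum_distrib_left sum.distrib algebra_simps)
  finally show ?thesis
    using assms HK by (simp add: index_mult_mat_sum del: index_mult_mat(1))
qed

text \<open>\<open>[aH + bK, cH + eK] = (ae - bc) [H, K]\<close>\<close>
lemma lin_comb_mat_commute_iff:
  "lin_comb_mat H K a b * lin_comb_mat H K c e = lin_comb_mat H K c e * lin_comb_mat H K a b
    \<longleftrightarrow> a * e = b * c \<or> H * K = K * H"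
proof -
  have eq_iff: "X = Y \<longleftrightarrow> (\<forall>i<d. \<forall>j<d. X $$ (i,j) - Y $$ (i,j) = 0)"
    if "X \<in> carrier_mat d d" "Y \<in> carrier_mat d d" for X Y :: "complex mat"
    using that by (auto intro!: eq_matI)
  have commutator: "(lin_comb_mat H K a b * lin_comb_mat H K c e) $$ (i,j)
      - (lin_comb_mat H K c e * lin_comb_mat H K a b) $$ (i,j)
    = (a * e - b * c) * ((H * K) $$ (i,j) - (K * H) $$ (i,j))" if "i < d" "j < d" for i j
    using that by (simp add: lin_comb_mat_mult_index algebra_simps del: index_mult_mat(1))
  have "lin_comb_mat H K a b * lin_comb_mat H K c e = lin_comb_mat H K c e * lin_comb_mat H K a b
      \<longleftrightarrow> (\<forall>i<d. \<forall>j<d. (a * e - b * c) * ((H * K) $$ (i,j) - (K * H) $$ (i,j)) = 0)"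
    unfolding eq_iff[OF mult_carrier_mat[OF lin_comb_mat_carrier lin_comb_mat_carrier]
        mult_carrier_mat[OF lin_comb_mat_carrier lin_comb_mat_carrier]]
    by (simp add: commutator del: index_mult_mat(1))
  also have "\<dots> \<longleftrightarrow> a * e - b * c = 0 \<or> (\<forall>i<d. \<forall>j<d. (H * K) $$ (i,j) - (K * H) $$ (i,j) = 0)"
    by auto
  also have "\<dots> \<longleftrightarrow> a * e = b * c \<or> H * K = K * H"
    using eq_iff[of "H * K" "K * H"] HK by auto
  finally show ?thesis .
qed

lemma dsum_lin_comb_mat_commute_iff:
  "dsum_mat (lin_comb_mat H K a b) (lin_comb_mat H K c e)
      * dsum_mat (lin_comb_mat H K a' b') (lin_comb_mat H K c' e')
    = dsum_mat (lin_comb_mat H K a' b') (lin_comb_mat H K c' e')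
      * dsum_mat (lin_comb_mat H K a b) (lin_comb_mat H K c e)
   \<longleftrightarrow> a * b' = b * a' \<and> c * e' = e * c' \<or> H * K = K * H"
  using lin_comb_mat_commute_iff[of a b a' b'] lin_comb_mat_commute_iff[of c e c' e']
  by (auto simp: dsum_mat_mult[of _ d _ d] mult_carrier_mat[of _ d d _ d]
      dsum_mat_eq_iff[of _ d _ d] mult.commute)

end

lemma dsum_triple_noncommuting:
  fixes Hs :: "nat \<Rightarrow> complex mat"
  assumes H: "H \<in> carrier_mat d d" and K: "K \<in> carrier_mat d d" and "H * K \<noteq> K * H"
    and "Hs 1 = dsum_mat H H" "Hs 2 = dsum_mat (- H) (- K)" "Hs 3 = dsum_mat K K"
  shows "(\<forall>j\<in>{1,2,3}. \<forall>k\<in>{1,2,3}. j \<noteq> k \<longrightarrow> Hs j * Hs k \<noteq> Hs k * Hs j)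
    \<and> (\<forall>j\<in>{1,2,3}. \<forall>k\<in>{1,2,3}. \<forall>l\<in>{1,2,3}. k \<noteq> l \<longrightarrow>
          Hs j * (Hs k + Hs l) \<noteq> (Hs k + Hs l) * Hs j)
    \<and> (\<forall>j\<in>{1,2,3}. Hs j * (Hs 1 + Hs 2 + Hs 3) \<noteq> (Hs 1 + Hs 2 + Hs 3) * Hs j)"
proof -
  note basis = lin_comb_mat_basis[OF H K, symmetric]
  have "Hs 1 = dsum_mat (lin_comb_mat H K 1 0) (lin_comb_mat H K 1 0)"
    "Hs 2 = dsum_mat (lin_comb_mat H K (-1) 0) (lin_comb_mat H K 0 (-1))"
    "Hs 3 = dsum_mat (lin_comb_mat H K 0 1) (lin_comb_mat H K 0 1)"
    using assms(4-6) by (simp_all only: basis)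
  then show ?thesis
    by (simp add: dsum_lin_comb_mat_add[OF H K] dsum_lin_comb_mat_commute_iff[OF H K] assms(3))
qed

lemma dsum_mat_telescoping_sum:
  assumes "H \<in> carrier_mat d d" "K \<in> carrier_mat d d"
  shows "dsum_mat H H + dsum_mat (- H) (- K) + dsum_mat K K = dsum_mat K H"
proof -
  have "H + - H + K = K" "H + - K + K = H"
    by (rule eq_matI; use assms in simp)+
  then show ?thesis
    using assms by (simp add: dsum_mat_add[of _ d _ d])
qed

lemma mat_exp_dsum_mat_telescoping_product:
  assumes hH: "hermitian_mat d H" and hK: "hermitian_mat d K"
  shows "mat_exp (c \<cdot>\<^sub>m dsum_mat H H) * mat_exp (c \<cdot>\<^sub>m dsum_mat (- H) (- K))
      * mat_exp (c \<cdot>\<^sub>m dsum_mat K K) = mat_exp (c \<cdot>\<^sub>m dsum_mat K H)"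
proof -
  have H: "H \<in> carrier_mat d d" and K: "K \<in> carrier_mat d d"
    using hH hK unfolding hermitian_mat_def by auto
  let ?E = "\<lambda>A. mat_exp (c \<cdot>\<^sub>m A)"
  have blocks: "?E (dsum_mat A B) = dsum_mat (?E A) (?E B)"
    if "A \<in> carrier_mat d d" "B \<in> carrier_mat d d" for A B
    using that by (simp add: dsum_mat_smult[of _ d _ d] mat_exp_dsum_mat[of _ d _ d])
  have EH: "?E H \<in> carrier_mat d d" and EK: "?E K \<in> carrier_mat d d"
    and EmH: "?E (- H) \<in> carrier_mat d d" and EmK: "?E (- K) \<in> carrier_mat d d"
    using H K by simp_all
  have "?E (dsum_mat H H) * ?E (dsum_mat (- H) (- K)) * ?E (dsum_mat K K)
      = dsum_mat (?E H) (?E H) * dsum_mat (?E (- H)) (?E (- K)) * dsum_mat (?E K) (?E K)"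
    using H K by (simp add: blocks)
  also have "\<dots> = dsum_mat (?E H * ?E (- H) * ?E K) (?E H * ?E (- K) * ?E K)"
    using EH EK EmH EmK by (simp add: dsum_mat_mult[of _ d _ d] mult_carrier_mat[of _ d d _ d])
  also have "?E H * ?E (- K) * ?E K = ?E H * (?E (- K) * ?E K)"
    by (rule assoc_mult_mat[OF EH EmK EK])
  also have "\<dots> = ?E H"
    using EH by (simp add: mat_exp_smult_hermitian_inverse[OF hK])
  also have "?E H * ?E (- H) * ?E K = ?E K"
    using EK by (simp add: mat_exp_smult_hermitian_inverse[OF hH])
  finally show ?thesis using H K by (simp add: blocks)
qed

theorem mainTheorem6:
  fixes d :: nat and H K :: "complex mat" and Hs :: "nat \<Rightarrow> complex mat"
  assumes "hermitian_mat d H" and "hermitian_mat d K"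
    and "H * K \<noteq> K * H"
    and "Hs 1 = dsum_mat H H"
    and "Hs 2 = dsum_mat (- H) (- K)"
    and "Hs 3 = dsum_mat K K"
  shows "(\<forall>j\<in>{1,2,3}. \<forall>k\<in>{1,2,3}. j \<noteq> k \<longrightarrow> Hs j * Hs k \<noteq> Hs k * Hs j)
    \<and> (\<forall>j\<in>{1,2,3}. \<forall>k\<in>{1,2,3}. \<forall>l\<in>{1,2,3}. k \<noteq> l \<longrightarrow>
          Hs j * (Hs k + Hs l) \<noteq> (Hs k + Hs l) * Hs j)
    \<and> (\<forall>j\<in>{1,2,3}. Hs j * (Hs 1 + Hs 2 + Hs 3) \<noteq> (Hs 1 + Hs 2 + Hs 3) * Hs j)
    \<and> mtrace (mat_exp (Hs 1 + Hs 2 + Hs 3)) = mtrace (mat_exp (Hs 1) * mat_exp (Hs 2) * mat_exp (Hs 3))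
    \<and> (\<forall>r::real. r > 0 \<longrightarrow>
         mtrace (mat_exp (complex_of_real r \<cdot>\<^sub>m (Hs 1 + Hs 2 + Hs 3))) =
         integral\<^sup>L beta0 (\<lambda>t. mtrace (mat_abs_pow
            (mat_exp ((1 + \<i> * complex_of_real t) \<cdot>\<^sub>m Hs 1)
             * mat_exp ((1 + \<i> * complex_of_real t) \<cdot>\<^sub>m Hs 2)
             * mat_exp ((1 + \<i> * complex_of_real t) \<cdot>\<^sub>m Hs 3)) r)))"
proof -
  have H: "H \<in> carrier_mat d d" and K: "K \<in> carrier_mat d d"
    using assms(1,2) unfolding hermitian_mat_def by auto
  note noncommuting = dsum_triple_noncommuting[OF H K assms(3-6)]
  define G where "G = dsum_mat K H"
  have sum: "Hs 1 + Hs 2 + Hs 3 = G"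
    unfolding G_def assms(4-6) by (rule dsum_mat_telescoping_sum[OF H K])
  have product: "mat_exp (c \<cdot>\<^sub>m Hs 1) * mat_exp (c \<cdot>\<^sub>m Hs 2) * mat_exp (c \<cdot>\<^sub>m Hs 3) = mat_exp (c \<cdot>\<^sub>m G)"
    for c
    unfolding G_def assms(4-6) by (rule mat_exp_dsum_mat_telescoping_product[OF assms(1,2)])
  have "hermitian_mat (d + d) G"
    unfolding G_def by (rule hermitian_dsum_mat[OF assms(2,1)])
  from mat_abs_pow_mat_exp_hermitian[OF this]
  have "mtrace (mat_abs_pow (mat_exp ((1 + \<i> * complex_of_real t) \<cdot>\<^sub>m G)) r)
      = mtrace (mat_exp (complex_of_real r \<cdot>\<^sub>m G))" for t r
    by simp
  then show ?thesis
    using noncommuting unfolding sum product product[of 1, unfolded smult_one_mat]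
    by (simp add: measure_beta0_space)
qed
end
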